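(* Let $A=(a_{i,j})$ be a symmetric $n\times n$ matrix with nonnegative entries whose associated undirected graph on $\{1,\dots,n\}$ (edge $\{i,j\}$ present iff $a_{i,j}>0$, self-loops allowed) is connected, let $\deg(i)=\sum_{j=1}^n a_{i,j}>0$, and let $\gamma_1,\dots,\gamma_n>0$. Let $\beta^*\in[0,1]^n$ be an equilibrium point, i.e. $F(\beta^* )=\beta^*$. If $\beta_i^*=0$ for some $i$, then $\beta_i^*=0$ for all $i$; likewise, if $\beta_i^*=1$ for some $i$, then $\beta_i^*=1$ for all $i$.
   Context: For $\mu\in[0,1]$ and $\gamma>0$ define $f(\mu,\gamma)=\dfrac{\gamma\mu}{1+(\gamma-1)\mu}$. For $\beta\in[0,1]^n$ let $\mu_i(\beta)=\frac{1}{\deg(i)}\sum_{j=1}^n a_{i,j}\beta_j$ and define $F:[0,1]^n\to[0,1]^n$ by $F_i(\beta)=f(\mu_i(\beta),\gamma_i)$. A point $\beta$ with $F(\beta)=\beta$ is called an equilibrium point. *)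

theory Defs
  imports Main "HOL-Analysis.Analysis"
begin

text \<open>Vertices are indexed by 0..<n (i.e. index i here corresponds to i+1 in the paper).
  The matrix A is a function a :: nat => nat => real, only entries with indices < n matter.\<close>

definition fmap :: "real \<Rightarrow> real \<Rightarrow> real" where
  "fmap \<mu> \<gamma> = \<gamma> * \<mu> / (1 + (\<gamma> - 1) * \<mu>)"

definition deg :: "nat \<Rightarrow> (nat \<Rightarrow> nat \<Rightarrow> real) \<Rightarrow> nat \<Rightarrow> real" where
  "deg n a i = (\<Sum>j<n. a i j)"

definition mu :: "nat \<Rightarrow> (nat \<Rightarrow> nat \<Rightarrow> real) \<Rightarrow> (nat \<Rightarrow> real) \<Rightarrow> nat \<Rightarrow> real" where
  "mu n a \<beta> i = (1 / deg n a i) * (\<Sum>j<n. a i j * \<beta> j)"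

definition Fmap :: "nat \<Rightarrow> (nat \<Rightarrow> nat \<Rightarrow> real) \<Rightarrow> (nat \<Rightarrow> real) \<Rightarrow> (nat \<Rightarrow> real) \<Rightarrow> nat \<Rightarrow> real" where
  "Fmap n a \<gamma> \<beta> i = fmap (mu n a \<beta> i) (\<gamma> i)"

definition graph_edges :: "nat \<Rightarrow> (nat \<Rightarrow> nat \<Rightarrow> real) \<Rightarrow> (nat \<times> nat) set" where
  "graph_edges n a = {(i, j). i < n \<and> j < n \<and> a i j > 0}"

definition graph_connected :: "nat \<Rightarrow> (nat \<Rightarrow> nat \<Rightarrow> real) \<Rightarrow> bool" where
  "graph_connected n a \<longleftrightarrow> (\<forall>i<n. \<forall>j<n. (i, j) \<in> (graph_edges n a)\<^sup>*)"

definition equilibrium :: "nat \<Rightarrow> (nat \<Rightarrow> nat \<Rightarrow> real) \<Rightarrow> (nat \<Rightarrow> real) \<Rightarrow> (nat \<Rightarrow> real) \<Rightarrow> bool" where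
  "equilibrium n a \<gamma> \<beta> \<longleftrightarrow> (\<forall>i<n. Fmap n a \<gamma> \<beta> i = \<beta> i)"

end

theory Submission
  imports Defs
begin

text \<open>For \<gamma> > 0 and \<mu> \<in> [0,1], f(\<mu>, \<gamma>) = 0 only if \<mu> = 0, and f(\<mu>, \<gamma>) = 1 only if
  \<mu> = 1. So at an equilibrium with \<beta> i = 0 the weighted mean of the values at the neighbours
  of i vanishes, which forces \<beta> j = 0 for every j with a i j > 0; dually for the value 1.
  Both properties therefore spread along edges, and connectivity carries them to every vertex.\<close>

lemma fmap_denominator_pos:
  fixes \<mu> \<gamma> :: real
  assumes "\<gamma> > 0" "0 \<le> \<mu>" "\<mu> \<le> 1"
  shows "1 + (\<gamma> - 1) * \<mu> > 0"
proof -
  have "(1 - \<mu>) + \<gamma> * \<mu> > 0"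
  proof (cases "\<mu> < 1")
    case True
    then show ?thesis using assms by (simp add: add_pos_nonneg)
  next
    case False
    then show ?thesis using assms by simp
  qed
  then show ?thesis by (simp add: algebra_simps)
qed

lemma fmap_eq_0_imp:
  fixes \<mu> \<gamma> :: real
  assumes "\<gamma> > 0" "0 \<le> \<mu>" "\<mu> \<le> 1" "fmap \<mu> \<gamma> = 0"
  shows "\<mu> = 0"
  using assms fmap_denominator_pos[OF assms(1-3)] by (simp add: fmap_def)

lemma fmap_eq_1_imp:
  fixes \<mu> \<gamma> :: real
  assumes "\<gamma> > 0" "0 \<le> \<mu>" "\<mu> \<le> 1" "fmap \<mu> \<gamma> = 1"
  shows "\<mu> = 1"
proof -
  have "\<gamma> * \<mu> = 1 + (\<gamma> - 1) * \<mu>"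
    using assms fmap_denominator_pos[OF assms(1-3)] by (simp add: fmap_def field_simps)
  then show ?thesis by (simp add: algebra_simps)
qed

lemma weighted_sum_eq_0_imp:
  fixes w x :: "'a \<Rightarrow> real"
  assumes "finite I" "\<forall>k\<in>I. 0 \<le> w k \<and> 0 \<le> x k" "(\<Sum>k\<in>I. w k * x k) = 0"
    and "j \<in> I" "w j > 0"
  shows "x j = 0"
proof -
  have "\<forall>k\<in>I. w k * x k = 0"
    using assms(1-3) sum_nonneg_eq_0_iff[of I "\<lambda>k. w k * x k"] by simp
  then have "w j * x j = 0" using assms(4) by blast
  then show ?thesis using assms(5) by simp
qed

context
  fixes n :: nat and a :: "nat \<Rightarrow> nat \<Rightarrow> real" and \<beta> :: "nat \<Rightarrow> real" and i :: nat
  assumes nonneg: "\<forall>j<n. a i j \<ge> 0"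
    and deg_pos: "deg n a i > 0"
    and range: "\<forall>j<n. 0 \<le> \<beta> j \<and> \<beta> j \<le> 1"
begin

lemma mu_nonneg: "mu n a \<beta> i \<ge> 0"
proof -
  have "(\<Sum>j<n. a i j * \<beta> j) \<ge> 0" using nonneg range by (auto intro!: sum_nonneg)
  then show ?thesis using deg_pos by (simp add: mu_def)
qed

lemma mu_le_1: "mu n a \<beta> i \<le> 1"
proof -
  have "(\<Sum>j<n. a i j * \<beta> j) \<le> deg n a i"
    unfolding deg_def using nonneg range by (auto intro!: sum_mono mult_left_le)
  then show ?thesis using deg_pos by (simp add: mu_def)
qed

lemma mu_eq_0_imp:
  assumes "mu n a \<beta> i = 0" "j < n" "a i j > 0"
  shows "\<beta> j = 0"
proof -
  have sum_0: "(\<Sum>k<n. a i k * \<beta> k) = 0" using assms(1) deg_pos by (simp add: mu_def)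
  have nonneg_terms: "\<forall>k\<in>{..<n}. 0 \<le> a i k \<and> 0 \<le> \<beta> k" using nonneg range by simp
  have "j \<in> {..<n}" using assms(2) by simp
  from weighted_sum_eq_0_imp[OF finite_lessThan nonneg_terms sum_0 this assms(3)] show ?thesis .
qed

lemma mu_eq_1_imp:
  assumes "mu n a \<beta> i = 1" "j < n" "a i j > 0"
  shows "\<beta> j = 1"
proof -
  have "(\<Sum>k<n. a i k * \<beta> k) = deg n a i" using assms(1) deg_pos by (simp add: mu_def)
  then have sum_0: "(\<Sum>k<n. a i k * (1 - \<beta> k)) = 0"
    by (simp add: deg_def algebra_simps sum_subtractf)
  have nonneg_terms: "\<forall>k\<in>{..<n}. 0 \<le> a i k \<and> 0 \<le> 1 - \<beta> k" using nonneg range by simp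
  have "j \<in> {..<n}" using assms(2) by simp
  from weighted_sum_eq_0_imp[OF finite_lessThan nonneg_terms sum_0 this assms(3)] show ?thesis
    by simp
qed

end

lemma equilibrium_edge_preserves_0_and_1:
  assumes nonneg: "\<forall>i<n. \<forall>j<n. a i j \<ge> 0"
    and deg_pos: "\<forall>i<n. deg n a i > 0"
    and \<gamma>_pos: "\<forall>i<n. \<gamma> i > 0"
    and range: "\<forall>i<n. 0 \<le> \<beta> i \<and> \<beta> i \<le> 1"
    and eq: "equilibrium n a \<gamma> \<beta>"
    and edge: "(i, j) \<in> graph_edges n a"
  shows "(\<beta> i = 0 \<longrightarrow> \<beta> j = 0) \<and> (\<beta> i = 1 \<longrightarrow> \<beta> j = 1)"
proof -
  have ij: "i < n" "j < n" "a i j > 0" using edge by (auto simp: graph_edges_def)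
  have row: "\<forall>j<n. a i j \<ge> 0" and deg_i: "deg n a i > 0" and \<gamma>_i: "\<gamma> i > 0"
    using nonneg deg_pos \<gamma>_pos ij by auto
  have \<mu>_range: "0 \<le> mu n a \<beta> i" "mu n a \<beta> i \<le> 1"
    using mu_nonneg[OF row deg_i range] mu_le_1[OF row deg_i range] .
  have \<beta>_i: "\<beta> i = fmap (mu n a \<beta> i) (\<gamma> i)"
    using eq ij by (simp add: equilibrium_def Fmap_def)
  show ?thesis
  proof (intro conjI impI)
    assume "\<beta> i = 0"
    then have "mu n a \<beta> i = 0" using fmap_eq_0_imp[OF \<gamma>_i \<mu>_range] \<beta>_i by simp
    then show "\<beta> j = 0" using mu_eq_0_imp[OF row deg_i range] ij by blast
  next
    assume "\<beta> i = 1"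
    then have "mu n a \<beta> i = 1" using fmap_eq_1_imp[OF \<gamma>_i \<mu>_range] \<beta>_i by simp
    then show "\<beta> j = 1" using mu_eq_1_imp[OF row deg_i range] ij by blast
  qed
qed

theorem lemma1:
  fixes n :: nat and a :: "nat \<Rightarrow> nat \<Rightarrow> real"
    and \<gamma> :: "nat \<Rightarrow> real" and \<beta> :: "nat \<Rightarrow> real"
  assumes sym: "\<forall>i<n. \<forall>j<n. a i j = a j i"
    and nonneg: "\<forall>i<n. \<forall>j<n. a i j \<ge> 0"
    and conn: "graph_connected n a"
    and degpos: "\<forall>i<n. deg n a i > 0"
    and gpos: "\<forall>i<n. \<gamma> i > 0"
    and range: "\<forall>i<n. 0 \<le> \<beta> i \<and> \<beta> i \<le> 1"
    and eq: "equilibrium n a \<gamma> \<beta>"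
  shows "((\<exists>i<n. \<beta> i = 0) \<longrightarrow> (\<forall>i<n. \<beta> i = 0))
       \<and> ((\<exists>i<n. \<beta> i = 1) \<longrightarrow> (\<forall>i<n. \<beta> i = 1))"
proof -
  have path: "(\<beta> i = 0 \<longrightarrow> \<beta> j = 0) \<and> (\<beta> i = 1 \<longrightarrow> \<beta> j = 1)"
    if "(i, j) \<in> (graph_edges n a)\<^sup>*" for i j
    using that
  proof (induction rule: rtrancl_induct)
    case base
    then show ?case by simp
  next
    case (step y z)
    then show ?case
      using equilibrium_edge_preserves_0_and_1[OF nonneg degpos gpos range eq step.hyps(2)]
      by blast
  qed
  show ?thesis
    using conn path unfolding graph_connected_def by blast
qed

end
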